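(* There is an absolute constant $C$ such that for every $\alpha>0$ and every classical ($C^2$) solution $u$ of the equivariant Skyrme equation on an open subset of $\{(t,r):r>0\}$, \[ |\partial_\xi(r(e+m))|\le C\big((e+m)(e-m)\big)^{1/2},\qquad |\partial_\eta(r(e-m))|\le C\big((e+m)(e-m)\big)^{1/2}, \] where $\eta=t+r$, $\xi=t-r$ are null coordinates, i.e. $\partial_\xi=\frac12(\partial_t-\partial_r)$, $\partial_\eta=\frac12(\partial_t+\partial_r)$.
   Context: The equivariant Skyrme equation is \[ w(u_{tt}-u_{rr}) - \Big(1-\tfrac{\alpha^2\sin^2u}{r^2}\Big)\tfrac{u_r}{r} + \tfrac{\sin 2u}{2r^2}\big[\alpha^2(u_t^2-u_r^2)+1\big]=0,\qquad w:=1+\tfrac{\alpha^2\sin^2u}{r^2}. \] Energy density $e:=w\frac{u_t^2+u_r^2}{2}+\frac{\sin^2u}{2r^2}$, momentum density $m:=w u_tu_r$ (note $e\pm m\ge0$). *)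

theory Defs
  imports "HOL-Analysis.Analysis"
begin

text \<open>Points of the (t,r) half-plane are pairs p = (t, r): t = fst p, r = snd p.
  Partial derivatives are taken as directional Frechet derivatives.\<close>

definition dt :: "(real \<times> real \<Rightarrow> real) \<Rightarrow> real \<times> real \<Rightarrow> real" where
  "dt f p = frechet_derivative f (at p) (1, 0)"

definition dr :: "(real \<times> real \<Rightarrow> real) \<Rightarrow> real \<times> real \<Rightarrow> real" where
  "dr f p = frechet_derivative f (at p) (0, 1)"

definition dxi :: "(real \<times> real \<Rightarrow> real) \<Rightarrow> real \<times> real \<Rightarrow> real" where
  "dxi f p = frechet_derivative f (at p) (1/2, -1/2)"

definition deta :: "(real \<times> real \<Rightarrow> real) \<Rightarrow> real \<times> real \<Rightarrow> real" where
  "deta f p = frechet_derivative f (at p) (1/2, 1/2)"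

definition C2_on :: "(real \<times> real) set \<Rightarrow> (real \<times> real \<Rightarrow> real) \<Rightarrow> bool" where
  "C2_on U u \<longleftrightarrow>
     (\<forall>p\<in>U. u differentiable (at p)) \<and>
     (\<forall>p\<in>U. dt u differentiable (at p) \<and> dr u differentiable (at p)) \<and>
     continuous_on U (dt (dt u)) \<and> continuous_on U (dr (dt u)) \<and>
     continuous_on U (dt (dr u)) \<and> continuous_on U (dr (dr u))"

definition skyrme_w :: "real \<Rightarrow> (real \<times> real \<Rightarrow> real) \<Rightarrow> real \<times> real \<Rightarrow> real" where
  "skyrme_w \<alpha> u p = 1 + \<alpha>\<^sup>2 * (sin (u p))\<^sup>2 / (snd p)\<^sup>2"

definition skyrme_eq_on :: "real \<Rightarrow> (real \<times> real) set \<Rightarrow> (real \<times> real \<Rightarrow> real) \<Rightarrow> bool" where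
  "skyrme_eq_on \<alpha> U u \<longleftrightarrow> (\<forall>p\<in>U.
     skyrme_w \<alpha> u p * (dt (dt u) p - dr (dr u) p)
     - (1 - \<alpha>\<^sup>2 * (sin (u p))\<^sup>2 / (snd p)\<^sup>2) * dr u p / snd p
     + sin (2 * u p) / (2 * (snd p)\<^sup>2) * (\<alpha>\<^sup>2 * ((dt u p)\<^sup>2 - (dr u p)\<^sup>2) + 1) = 0)"

definition energy :: "real \<Rightarrow> (real \<times> real \<Rightarrow> real) \<Rightarrow> real \<times> real \<Rightarrow> real" where
  "energy \<alpha> u p = skyrme_w \<alpha> u p * ((dt u p)\<^sup>2 + (dr u p)\<^sup>2) / 2
     + (sin (u p))\<^sup>2 / (2 * (snd p)\<^sup>2)"

definition momentum :: "real \<Rightarrow> (real \<times> real \<Rightarrow> real) \<Rightarrow> real \<times> real \<Rightarrow> real" where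
  "momentum \<alpha> u p = skyrme_w \<alpha> u p * dt u p * dr u p"

end

theory Submission
  imports Defs
begin

text \<open>
  Write A = u_t + u_r, B = u_t - u_r, k = \<alpha> sin u / r, z = sin u / r.  Then
  e + m = ((1 + k^2) A^2 + z^2) / 2 and e - m = ((1 + k^2) B^2 + z^2) / 2.
  Differentiating r (e + \<sigma> m) along the null direction (1/2, -\<sigma>/2), for \<sigma> = 1
  (the derivative d_xi) and \<sigma> = -1 (the derivative d_eta), the second derivatives of u
  enter only through u_tt - u_rr once the mixed partials are identified; eliminating
  u_tt - u_rr by the Skyrme equation leaves \<sigma> times the first-order "source"
  (k^2 - 1) A B / 4 - cos u z (A - B) / 2 + z^2 / 4.  Every product in the source
  pairs a component of (A, k A, z) with one of (B, k B, z), which are bounded by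
  sqrt (2 (e + m)) and sqrt (2 (e - m)) respectively, so the source is at most
  4 sqrt ((e + m)(e - m)), uniformly in \<alpha>.
\<close>

lemma frechet_derivative_Pair:
  fixes f :: "real \<times> real \<Rightarrow> real"
  assumes "f differentiable (at p)"
  shows "frechet_derivative f (at p) (a, b) = a * dt f p + b * dr f p"
proof -
  let ?D = "frechet_derivative f (at p)"
  have "linear ?D" using assms frechet_derivative_works has_derivative_linear by blast
  have "?D (a, b) = ?D (a *\<^sub>R (1, 0) + b *\<^sub>R (0, 1))" by simp
  also have "\<dots> = a * ?D (1, 0) + b * ?D (0, 1)"
    using \<open>linear ?D\<close> by (simp only: linear_add linear_cmul real_scaleR_def)
  finally show ?thesis unfolding dt_def dr_def .
qed

lemma has_real_derivative_t_slice:
  fixes f :: "real \<times> real \<Rightarrow> real"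
  assumes "f differentiable (at (x, y))"
  shows "((\<lambda>s. f (s, y)) has_real_derivative dt f (x, y)) (at x)"
proof -
  have "((\<lambda>s. (s, y)) has_derivative (\<lambda>h. (h, 0))) (at x)"
    by (auto intro!: derivative_eq_intros)
  from has_derivative_compose[OF this frechet_derivative_works[THEN iffD1, OF assms]]
  have "((\<lambda>s. f (s, y)) has_derivative (\<lambda>h. frechet_derivative f (at (x, y)) (h, 0))) (at x)"
    by simp
  moreover have "(\<lambda>h. frechet_derivative f (at (x, y)) (h, 0)) = (*) (dt f (x, y))"
    using frechet_derivative_Pair[OF assms] by auto
  ultimately show ?thesis
    by (simp add: has_field_derivative_def)
qed

lemma has_real_derivative_r_slice:
  fixes f :: "real \<times> real \<Rightarrow> real"
  assumes "f differentiable (at (x, y))"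
  shows "((\<lambda>s. f (x, s)) has_real_derivative dr f (x, y)) (at y)"
proof -
  have "((\<lambda>s. (x, s)) has_derivative (\<lambda>h. (0, h))) (at y)"
    by (auto intro!: derivative_eq_intros)
  from has_derivative_compose[OF this frechet_derivative_works[THEN iffD1, OF assms]]
  have "((\<lambda>s. f (x, s)) has_derivative (\<lambda>h. frechet_derivative f (at (x, y)) (0, h))) (at y)"
    by simp
  moreover have "(\<lambda>h. frechet_derivative f (at (x, y)) (0, h)) = (*) (dr f (x, y))"
    using frechet_derivative_Pair[OF assms] by auto
  ultimately show ?thesis
    by (simp add: has_field_derivative_def)
qed

lemma second_difference_dt_dr:
  fixes f :: "real \<times> real \<Rightarrow> real"
  assumes h: "h > 0"
    and square: "\<And>x y. x \<in> {t..t + h} \<Longrightarrow> y \<in> {r..r + h} \<Longrightarrow> (x, y) \<in> U"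
    and df: "\<forall>q\<in>U. f differentiable (at q)" and ddf: "\<forall>q\<in>U. dt f differentiable (at q)"
  obtains \<xi> \<eta> where "\<xi> \<in> {t<..<t + h}" "\<eta> \<in> {r<..<r + h}"
    "f (t + h, r + h) - f (t + h, r) - f (t, r + h) + f (t, r) = h * h * dr (dt f) (\<xi>, \<eta>)"
proof -
  have "t < t + h" "r < r + h" using h by simp_all
  have D1: "((\<lambda>x. f (x, r + h) - f (x, r)) has_real_derivative dt f (x, r + h) - dt f (x, r)) (at x)"
    if "t \<le> x" "x \<le> t + h" for x
    using that h square df by (intro DERIV_diff has_real_derivative_t_slice) auto
  from MVT2[OF \<open>t < t + h\<close> D1] obtain \<xi> where \<xi>: "t < \<xi>" "\<xi> < t + h"
    "f (t + h, r + h) - f (t + h, r) - (f (t, r + h) - f (t, r)) = h * (dt f (\<xi>, r + h) - dt f (\<xi>, r))"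
    by auto
  have D2: "((\<lambda>y. dt f (\<xi>, y)) has_real_derivative dr (dt f) (\<xi>, y)) (at y)"
    if "r \<le> y" "y \<le> r + h" for y
    using that \<xi> square ddf by (intro has_real_derivative_r_slice) auto
  from MVT2[OF \<open>r < r + h\<close> D2] obtain \<eta> where \<eta>: "r < \<eta>" "\<eta> < r + h"
    "dt f (\<xi>, r + h) - dt f (\<xi>, r) = h * dr (dt f) (\<xi>, \<eta>)"
    by auto
  show thesis
  proof (rule that[of \<xi> \<eta>])
    show "f (t + h, r + h) - f (t + h, r) - f (t, r + h) + f (t, r) = h * h * dr (dt f) (\<xi>, \<eta>)"
      using \<xi>(3) unfolding \<eta>(3) by (simp add: mult.assoc)
  qed (use \<xi> \<eta> in auto)
qed

lemma second_difference_dr_dt: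
  fixes f :: "real \<times> real \<Rightarrow> real"
  assumes h: "h > 0"
    and square: "\<And>x y. x \<in> {t..t + h} \<Longrightarrow> y \<in> {r..r + h} \<Longrightarrow> (x, y) \<in> U"
    and df: "\<forall>q\<in>U. f differentiable (at q)" and ddf: "\<forall>q\<in>U. dr f differentiable (at q)"
  obtains \<xi> \<eta> where "\<xi> \<in> {t<..<t + h}" "\<eta> \<in> {r<..<r + h}"
    "f (t + h, r + h) - f (t + h, r) - f (t, r + h) + f (t, r) = h * h * dt (dr f) (\<xi>, \<eta>)"
proof -
  have "t < t + h" "r < r + h" using h by simp_all
  have D1: "((\<lambda>y. f (t + h, y) - f (t, y)) has_real_derivative dr f (t + h, y) - dr f (t, y)) (at y)"
    if "r \<le> y" "y \<le> r + h" for y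
    using that h square df by (intro DERIV_diff has_real_derivative_r_slice) auto
  from MVT2[OF \<open>r < r + h\<close> D1] obtain \<eta> where \<eta>: "r < \<eta>" "\<eta> < r + h"
    "f (t + h, r + h) - f (t, r + h) - (f (t + h, r) - f (t, r)) = h * (dr f (t + h, \<eta>) - dr f (t, \<eta>))"
    by auto
  have D2: "((\<lambda>x. dr f (x, \<eta>)) has_real_derivative dt (dr f) (x, \<eta>)) (at x)"
    if "t \<le> x" "x \<le> t + h" for x
    using that \<eta> square ddf by (intro has_real_derivative_t_slice) auto
  from MVT2[OF \<open>t < t + h\<close> D2] obtain \<xi> where \<xi>: "t < \<xi>" "\<xi> < t + h"
    "dr f (t + h, \<eta>) - dr f (t, \<eta>) = h * dt (dr f) (\<xi>, \<eta>)"
    by auto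
  show thesis
  proof (rule that[of \<xi> \<eta>])
    show "f (t + h, r + h) - f (t + h, r) - f (t, r + h) + f (t, r) = h * h * dt (dr f) (\<xi>, \<eta>)"
      using \<eta>(3) unfolding \<xi>(3) by (simp add: mult.assoc)
  qed (use \<xi> \<eta> in auto)
qed

text \<open>Both equal the limit of the normalised second difference
  over shrinking squares, which is compared within any tolerance e.\<close>
lemma mixed_partials_commute:
  fixes f :: "real \<times> real \<Rightarrow> real"
  assumes U: "open U" "p \<in> U"
    and df: "\<forall>q\<in>U. f differentiable (at q)"
    and ddf: "\<forall>q\<in>U. dt f differentiable (at q) \<and> dr f differentiable (at q)"
    and cont: "continuous_on U (dr (dt f))" "continuous_on U (dt (dr f))"
  shows "dr (dt f) p = dt (dr f) p"
proof (rule dense_eq0_I[THEN eq_iff_diff_eq_0[THEN iffD2]])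
  fix e :: real
  assume "e > 0"
  then have "e / 2 > 0" by simp
  obtain d1 where d1: "d1 > 0"
      "\<forall>q\<in>U. dist q p < d1 \<longrightarrow> dist (dr (dt f) q) (dr (dt f) p) < e / 2"
    using cont(1) U(2) \<open>e / 2 > 0\<close> unfolding continuous_on_iff by blast
  obtain d2 where d2: "d2 > 0"
      "\<forall>q\<in>U. dist q p < d2 \<longrightarrow> dist (dt (dr f) q) (dt (dr f) p) < e / 2"
    using cont(2) U(2) \<open>e / 2 > 0\<close> unfolding continuous_on_iff by blast
  obtain \<rho> where \<rho>: "\<rho> > 0" "ball p \<rho> \<subseteq> U" using U open_contains_ball by blast
  obtain t r where p: "p = (t, r)" by fastforce
  define h where "h = min \<rho> (min d1 d2) / 3"
  have h: "h > 0" and h_small: "3 * h \<le> \<rho>" "3 * h \<le> d1" "3 * h \<le> d2"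
    using \<rho> d1 d2 by (simp_all add: h_def)
  have near: "(x, y) \<in> U \<and> dist (x, y) p < d1 \<and> dist (x, y) p < d2"
    if "x \<in> {t..t + h}" "y \<in> {r..r + h}" for x y
  proof -
    have "dist (x, y) p \<le> dist x t + dist y r"
      using norm_Pair_le[of "x - t" "y - r"] by (simp add: p dist_norm)
    also have "\<dots> \<le> 2 * h"
      using that by (simp add: dist_real_def)
    finally show ?thesis using h h_small \<rho>(2) by (auto simp: dist_commute)
  qed
  then have square: "(x, y) \<in> U" if "x \<in> {t..t + h}" "y \<in> {r..r + h}" for x y
    using that by blast
  obtain \<xi> \<eta> where \<xi>\<eta>: "\<xi> \<in> {t<..<t + h}" "\<eta> \<in> {r<..<r + h}"
    "f (t + h, r + h) - f (t + h, r) - f (t, r + h) + f (t, r) = h * h * dr (dt f) (\<xi>, \<eta>)"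
    using second_difference_dt_dr[OF h square] df ddf by blast
  obtain \<xi>' \<eta>' where \<xi>\<eta>': "\<xi>' \<in> {t<..<t + h}" "\<eta>' \<in> {r<..<r + h}"
    "f (t + h, r + h) - f (t + h, r) - f (t, r + h) + f (t, r) = h * h * dt (dr f) (\<xi>', \<eta>')"
    using second_difference_dr_dt[OF h square] df ddf by blast
  have "dr (dt f) (\<xi>, \<eta>) = dt (dr f) (\<xi>', \<eta>')" using \<xi>\<eta>(3) \<xi>\<eta>'(3) h by simp
  moreover have "\<bar>dr (dt f) (\<xi>, \<eta>) - dr (dt f) p\<bar> < e / 2"
    using d1(2) near[of \<xi> \<eta>] \<xi>\<eta>(1,2) by (auto simp: dist_real_def)
  moreover have "\<bar>dt (dr f) (\<xi>', \<eta>') - dt (dr f) p\<bar> < e / 2"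
    using d2(2) near[of \<xi>' \<eta>'] \<xi>\<eta>'(1,2) by (auto simp: dist_real_def)
  ultimately show "\<bar>dr (dt f) p - dt (dr f) p\<bar> \<le> e" by linarith
qed

text \<open>The first-order expression to which the null derivatives of r (e \<plusminus> m) reduce
  on solutions of the Skyrme equation.\<close>
definition skyrme_source :: "real \<Rightarrow> (real \<times> real \<Rightarrow> real) \<Rightarrow> real \<times> real \<Rightarrow> real" where
  "skyrme_source \<alpha> u p =
     ((\<alpha> * sin (u p) / snd p)\<^sup>2 - 1) * ((dt u p)\<^sup>2 - (dr u p)\<^sup>2) / 4
     - sin (u p) * cos (u p) * dr u p / snd p + (sin (u p) / snd p)\<^sup>2 / 4"

lemma energy_plus_sigma_momentum:
  fixes \<sigma> :: real
  assumes "\<sigma>\<^sup>2 = 1"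
  shows "energy \<alpha> u q + \<sigma> * momentum \<alpha> u q
    = skyrme_w \<alpha> u q * (dt u q + \<sigma> * dr u q)\<^sup>2 / 2 + (sin (u q))\<^sup>2 / (2 * (snd q)\<^sup>2)"
  using assms unfolding energy_def momentum_def by (simp add: power2_sum algebra_simps)

lemma skyrme_w_has_derivative:
  assumes Du: "(u has_derivative Du) (at p)" and r: "snd p \<noteq> 0"
  shows "(skyrme_w \<alpha> u has_derivative (\<lambda>h. \<alpha>\<^sup>2 *
      (2 * sin (u p) * cos (u p) * Du h / (snd p)\<^sup>2 - 2 * (sin (u p))\<^sup>2 * snd h / (snd p) ^ 3))) (at p)"
  unfolding skyrme_w_def[abs_def]
  apply (rule derivative_eq_intros Du refl | simp add: r)+
  apply (simp add: field_simps power2_eq_square power3_eq_cube r)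
  done

lemma null_flux_has_derivative:
  fixes u :: "real \<times> real \<Rightarrow> real" and \<sigma> :: real
  assumes Du: "(u has_derivative Du) (at p)" and DT: "(dt u has_derivative DT) (at p)"
    and DR: "(dr u has_derivative DR) (at p)" and r: "snd p \<noteq> 0"
  defines "s \<equiv> sin (u p)" and "c \<equiv> cos (u p)" and "Y \<equiv> dt u p + \<sigma> * dr u p"
  shows "((\<lambda>q. snd q * (skyrme_w \<alpha> u q * (dt u q + \<sigma> * dr u q)\<^sup>2 / 2 + (sin (u q))\<^sup>2 / (2 * (snd q)\<^sup>2)))
    has_derivative (\<lambda>h. snd h * (skyrme_w \<alpha> u p * Y\<^sup>2 / 2 + s\<^sup>2 / (2 * (snd p)\<^sup>2))
      + snd p * (\<alpha>\<^sup>2 * (2 * s * c * Du h / (snd p)\<^sup>2 - 2 * s\<^sup>2 * snd h / (snd p) ^ 3) * Y\<^sup>2 / 2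
        + skyrme_w \<alpha> u p * Y * (DT h + \<sigma> * DR h)
        + s * c * Du h / (snd p)\<^sup>2 - s\<^sup>2 * snd h / (snd p) ^ 3))) (at p)"
  unfolding s_def c_def Y_def
  apply (rule derivative_eq_intros skyrme_w_has_derivative[OF Du r] Du DT DR refl | simp add: r)+
  apply (simp add: field_simps power2_eq_square power3_eq_cube r)
  done

text \<open>The algebraic heart of the computation: once the second derivatives are replaced
  via the wave equation w W = ... (with W = u_tt - u_rr), the derivative of the flux along
  (1/2, -\<sigma>/2) collapses to \<sigma> times the source.\<close>
lemma null_flux_identity:
  fixes \<alpha> r s c T R W \<sigma> :: real
  assumes r: "r \<noteq> 0" and \<sigma>: "\<sigma> = 1 \<or> \<sigma> = -1"
    and wave: "(1 + \<alpha>\<^sup>2 * s\<^sup>2 / r\<^sup>2) * W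
      = (1 - \<alpha>\<^sup>2 * s\<^sup>2 / r\<^sup>2) * R / r - s * c * (\<alpha>\<^sup>2 * (T\<^sup>2 - R\<^sup>2) + 1) / r\<^sup>2"
  shows "- \<sigma> / 2 * ((1 + \<alpha>\<^sup>2 * s\<^sup>2 / r\<^sup>2) * (T + \<sigma> * R)\<^sup>2 / 2 + s\<^sup>2 / (2 * r\<^sup>2))
      + r * (\<alpha>\<^sup>2 * (2 * s * c * ((T - \<sigma> * R) / 2) / r\<^sup>2 - 2 * s\<^sup>2 * (- \<sigma> / 2) / r ^ 3) * (T + \<sigma> * R)\<^sup>2 / 2
        + (1 + \<alpha>\<^sup>2 * s\<^sup>2 / r\<^sup>2) * (T + \<sigma> * R) * (W / 2)
        + s * c * ((T - \<sigma> * R) / 2) / r\<^sup>2 - s\<^sup>2 * (- \<sigma> / 2) / r ^ 3)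
    = \<sigma> * (((\<alpha> * s / r)\<^sup>2 - 1) * (T\<^sup>2 - R\<^sup>2) / 4 - s * c * R / r + (s / r)\<^sup>2 / 4)"
proof -
  have "(1 + \<alpha>\<^sup>2 * s\<^sup>2 / r\<^sup>2) * (T + \<sigma> * R) * (W / 2)
      = (T + \<sigma> * R) / 2 * ((1 + \<alpha>\<^sup>2 * s\<^sup>2 / r\<^sup>2) * W)" by simp
  also have "\<dots> = (T + \<sigma> * R) / 2 * ((1 - \<alpha>\<^sup>2 * s\<^sup>2 / r\<^sup>2) * R / r
      - s * c * (\<alpha>\<^sup>2 * (T\<^sup>2 - R\<^sup>2) + 1) / r\<^sup>2)" by (simp only: wave)
  finally have kinetic: "(1 + \<alpha>\<^sup>2 * s\<^sup>2 / r\<^sup>2) * (T + \<sigma> * R) * (W / 2) = \<dots>" .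
  from \<sigma> show ?thesis
    unfolding kinetic using r by (elim disjE) (simp_all add: field_simps power2_eq_square power3_eq_cube)
qed

lemma abs_mult_le_sqrt:
  fixes x y P Q :: real
  assumes "x\<^sup>2 \<le> 2 * P" and "y\<^sup>2 \<le> 2 * Q"
  shows "\<bar>x * y\<bar> \<le> 2 * sqrt (P * Q)"
proof -
  have "0 \<le> 2 * P" using assms(1) zero_le_power2[of x] by linarith
  then have "(x * y)\<^sup>2 \<le> (2 * P) * (2 * Q)"
    unfolding power_mult_distrib by (rule mult_mono[OF assms]) simp
  have "\<bar>x * y\<bar> = sqrt ((x * y)\<^sup>2)" by simp
  also have "\<dots> \<le> sqrt (4 * (P * Q))"
    by (rule real_sqrt_le_mono) (use \<open>(x * y)\<^sup>2 \<le> (2 * P) * (2 * Q)\<close> in simp)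
  also have "\<dots> = 2 * sqrt (P * Q)"
    by (simp add: real_sqrt_mult)
  finally show ?thesis .
qed

text \<open>The source, written in null variables, is controlled by the geometric mean of
  the two null energies P = e + m and Q = e - m.\<close>
lemma null_product_bound:
  fixes A B k z c P Q :: real
  assumes P: "P = ((1 + k\<^sup>2) * A\<^sup>2 + z\<^sup>2) / 2" and Q: "Q = ((1 + k\<^sup>2) * B\<^sup>2 + z\<^sup>2) / 2"
    and c: "\<bar>c\<bar> \<le> 1"
  shows "\<bar>(k\<^sup>2 - 1) * (A * B) / 4 - c * z * (A - B) / 2 + z\<^sup>2 / 4\<bar> \<le> 4 * sqrt (P * Q)"
proof -
  let ?S = "sqrt (P * Q)"
  have nonneg: "0 \<le> A\<^sup>2" "0 \<le> (k * A)\<^sup>2" "0 \<le> z\<^sup>2" "0 \<le> B\<^sup>2" "0 \<le> (k * B)\<^sup>2" by simp_all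
  have P_parts: "A\<^sup>2 \<le> 2 * P" "(k * A)\<^sup>2 \<le> 2 * P" "z\<^sup>2 \<le> 2 * P"
    using nonneg unfolding P by (simp_all add: power_mult_distrib algebra_simps)
  have Q_parts: "B\<^sup>2 \<le> 2 * Q" "(k * B)\<^sup>2 \<le> 2 * Q" "z\<^sup>2 \<le> 2 * Q"
    using nonneg unfolding Q by (simp_all add: power_mult_distrib algebra_simps)
  have AB: "\<bar>A * B\<bar> \<le> 2 * ?S" by (rule abs_mult_le_sqrt[OF P_parts(1) Q_parts(1)])
  have kAkB: "\<bar>(k * A) * (k * B)\<bar> \<le> 2 * ?S" by (rule abs_mult_le_sqrt[OF P_parts(2) Q_parts(2)])
  have Az: "\<bar>A * z\<bar> \<le> 2 * ?S" by (rule abs_mult_le_sqrt[OF P_parts(1) Q_parts(3)])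
  have zB: "\<bar>z * B\<bar> \<le> 2 * ?S" by (rule abs_mult_le_sqrt[OF P_parts(3) Q_parts(1)])
  have zz: "\<bar>z * z\<bar> \<le> 2 * ?S" by (rule abs_mult_le_sqrt[OF P_parts(3) Q_parts(3)])
  have "\<bar>c * z * (A - B)\<bar> \<le> 4 * ?S"
  proof -
    have "c * z * (A - B) = c * (A * z - z * B)" by (simp add: algebra_simps)
    then have "\<bar>c * z * (A - B)\<bar> = \<bar>c\<bar> * \<bar>A * z - z * B\<bar>" by (simp only: abs_mult)
    also have "\<dots> \<le> \<bar>A * z - z * B\<bar>" using c by (simp add: mult_left_le_one_le)
    finally show ?thesis using Az zB by linarith
  qed
  note bounds = abs_le_D1[OF this] abs_le_D2[OF this] abs_le_D1[OF AB] abs_le_D2[OF AB]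
    abs_le_D1[OF kAkB] abs_le_D2[OF kAkB] abs_le_D1[OF zz] abs_le_D2[OF zz]
  have expr: "(k\<^sup>2 - 1) * (A * B) / 4 - c * z * (A - B) / 2 + z\<^sup>2 / 4
      = ((k * A) * (k * B) - A * B) / 4 - c * z * (A - B) / 2 + z * z / 4"
    by (simp add: power2_eq_square algebra_simps)
  show ?thesis unfolding expr using bounds by (intro abs_leI) argo+
qed

lemma null_flux_derivative:
  fixes u :: "real \<times> real \<Rightarrow> real" and \<sigma> :: real
  assumes U: "open U" "U \<subseteq> {p. snd p > 0}" and C2: "C2_on U u"
    and wave_eq: "skyrme_eq_on \<alpha> U u" and p: "p \<in> U" and \<sigma>: "\<sigma> = 1 \<or> \<sigma> = -1"
  shows "frechet_derivative (\<lambda>q. snd q * (energy \<alpha> u q + \<sigma> * momentum \<alpha> u q)) (at p) (1/2, - \<sigma> / 2)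
    = \<sigma> * skyrme_source \<alpha> u p"
proof -
  let ?r = "snd p" and ?s = "sin (u p)" and ?c = "cos (u p)" and ?T = "dt u p" and ?R = "dr u p"
    and ?W = "dt (dt u) p - dr (dr u) p" and ?v = "(1/2, - \<sigma> / 2) :: real \<times> real"
  have r: "?r > 0" using U(2) p by auto
  have \<sigma>2: "\<sigma>\<^sup>2 = 1" using \<sigma> by auto
  have du: "u differentiable (at p)" and ddu: "dt u differentiable (at p)" "dr u differentiable (at p)"
    using C2 p unfolding C2_on_def by auto
  have sym: "dr (dt u) p = dt (dr u) p"
    using C2 unfolding C2_on_def by (intro mixed_partials_commute[OF U(1) p]) auto
  have Du_v: "frechet_derivative u (at p) (1/2, - (\<sigma> / 2)) = (?T - \<sigma> * ?R) / 2"
    using frechet_derivative_Pair[OF du] by simp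
  have D2u_v: "frechet_derivative (dt u) (at p) (1/2, - (\<sigma> / 2))
      + \<sigma> * frechet_derivative (dr u) (at p) (1/2, - (\<sigma> / 2)) = ?W / 2"
    using frechet_derivative_Pair[OF ddu(1)] frechet_derivative_Pair[OF ddu(2)] sym \<sigma>2
    by (simp add: algebra_simps power2_eq_square)
  have wave: "(1 + \<alpha>\<^sup>2 * ?s\<^sup>2 / ?r\<^sup>2) * ?W
      = (1 - \<alpha>\<^sup>2 * ?s\<^sup>2 / ?r\<^sup>2) * ?R / ?r - ?s * ?c * (\<alpha>\<^sup>2 * (?T\<^sup>2 - ?R\<^sup>2) + 1) / ?r\<^sup>2"
    using bspec[OF wave_eq[unfolded skyrme_eq_on_def] p] unfolding skyrme_w_def
    by (simp add: sin_double)
  have "(\<lambda>q. snd q * (energy \<alpha> u q + \<sigma> * momentum \<alpha> u q))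
      = (\<lambda>q. snd q * (skyrme_w \<alpha> u q * (dt u q + \<sigma> * dr u q)\<^sup>2 / 2 + (sin (u q))\<^sup>2 / (2 * (snd q)\<^sup>2)))"
    using energy_plus_sigma_momentum[OF \<sigma>2] by simp
  moreover note null_flux_has_derivative[OF du[unfolded frechet_derivative_works]
      ddu(1)[unfolded frechet_derivative_works] ddu(2)[unfolded frechet_derivative_works], of \<alpha> \<sigma>]
  ultimately have "frechet_derivative (\<lambda>q. snd q * (energy \<alpha> u q + \<sigma> * momentum \<alpha> u q)) (at p) ?v
      = - \<sigma> / 2 * ((1 + \<alpha>\<^sup>2 * ?s\<^sup>2 / ?r\<^sup>2) * (?T + \<sigma> * ?R)\<^sup>2 / 2 + ?s\<^sup>2 / (2 * ?r\<^sup>2))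
      + ?r * (\<alpha>\<^sup>2 * (2 * ?s * ?c * ((?T - \<sigma> * ?R) / 2) / ?r\<^sup>2 - 2 * ?s\<^sup>2 * (- \<sigma> / 2) / ?r ^ 3) * (?T + \<sigma> * ?R)\<^sup>2 / 2
        + (1 + \<alpha>\<^sup>2 * ?s\<^sup>2 / ?r\<^sup>2) * (?T + \<sigma> * ?R) * (?W / 2)
        + ?s * ?c * ((?T - \<sigma> * ?R) / 2) / ?r\<^sup>2 - ?s\<^sup>2 * (- \<sigma> / 2) / ?r ^ 3)"
    using r by (simp add: frechet_derivative_at[symmetric] Du_v D2u_v skyrme_w_def)
  also have "\<dots> = \<sigma> * skyrme_source \<alpha> u p"
    unfolding skyrme_source_def using null_flux_identity[OF _ \<sigma> wave] r by simp
  finally show ?thesis .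
qed

lemma skyrme_source_bound:
  assumes r: "snd p \<noteq> 0"
  shows "\<bar>skyrme_source \<alpha> u p\<bar>
    \<le> 4 * sqrt ((energy \<alpha> u p + momentum \<alpha> u p) * (energy \<alpha> u p - momentum \<alpha> u p))"
proof -
  let ?A = "dt u p + dr u p" and ?B = "dt u p - dr u p"
    and ?k = "\<alpha> * sin (u p) / snd p" and ?z = "sin (u p) / snd p"
  have P: "energy \<alpha> u p + momentum \<alpha> u p = ((1 + ?k\<^sup>2) * ?A\<^sup>2 + ?z\<^sup>2) / 2"
    using energy_plus_sigma_momentum[of 1 \<alpha> u p] r
    by (simp add: skyrme_w_def field_simps power2_eq_square)
  have Q: "energy \<alpha> u p - momentum \<alpha> u p = ((1 + ?k\<^sup>2) * ?B\<^sup>2 + ?z\<^sup>2) / 2"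
    using energy_plus_sigma_momentum[of "-1" \<alpha> u p] r
    by (simp add: skyrme_w_def field_simps power2_eq_square)
  have source: "skyrme_source \<alpha> u p
      = (?k\<^sup>2 - 1) * (?A * ?B) / 4 - cos (u p) * ?z * (?A - ?B) / 2 + ?z\<^sup>2 / 4"
    unfolding skyrme_source_def by (simp add: power2_eq_square algebra_simps)
  show ?thesis
    unfolding source by (rule null_product_bound[OF P Q abs_cos_le_one])
qed

theorem mainTheorem9:
  shows "\<exists>C::real. \<forall>\<alpha>::real. \<forall>U u. \<alpha> > 0 \<and> open U \<and> U \<subseteq> {p. snd p > 0}
     \<and> C2_on U u \<and> skyrme_eq_on \<alpha> U u \<longrightarrow>
     (\<forall>p\<in>U.
        \<bar>dxi (\<lambda>q. snd q * (energy \<alpha> u q + momentum \<alpha> u q)) p\<bar>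
          \<le> C * sqrt ((energy \<alpha> u p + momentum \<alpha> u p) * (energy \<alpha> u p - momentum \<alpha> u p))
      \<and> \<bar>deta (\<lambda>q. snd q * (energy \<alpha> u q - momentum \<alpha> u q)) p\<bar>
          \<le> C * sqrt ((energy \<alpha> u p + momentum \<alpha> u p) * (energy \<alpha> u p - momentum \<alpha> u p)))"
proof (intro exI[of _ 4] allI impI ballI)
  fix \<alpha> :: real and U u p
  assume "\<alpha> > 0 \<and> open U \<and> U \<subseteq> {p. snd p > 0} \<and> C2_on U u \<and> skyrme_eq_on \<alpha> U u"
  then have U: "open U" "U \<subseteq> {p. snd p > 0}" and C2: "C2_on U u" and eq: "skyrme_eq_on \<alpha> U u"
    by auto
  assume p: "p \<in> U"
  then have r: "snd p \<noteq> 0" using U(2) by auto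
  have "dxi (\<lambda>q. snd q * (energy \<alpha> u q + momentum \<alpha> u q)) p = skyrme_source \<alpha> u p"
    using null_flux_derivative[OF U C2 eq p, of 1] unfolding dxi_def by simp
  moreover have "deta (\<lambda>q. snd q * (energy \<alpha> u q - momentum \<alpha> u q)) p = - skyrme_source \<alpha> u p"
    using null_flux_derivative[OF U C2 eq p, of "-1"] unfolding deta_def by simp
  ultimately show "\<bar>dxi (\<lambda>q. snd q * (energy \<alpha> u q + momentum \<alpha> u q)) p\<bar>
          \<le> 4 * sqrt ((energy \<alpha> u p + momentum \<alpha> u p) * (energy \<alpha> u p - momentum \<alpha> u p))
      \<and> \<bar>deta (\<lambda>q. snd q * (energy \<alpha> u q - momentum \<alpha> u q)) p\<bar>
          \<le> 4 * sqrt ((energy \<alpha> u p + momentum \<alpha> u p) * (energy \<alpha> u p - momentum \<alpha> u p))"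
    using skyrme_source_bound[OF r, of \<alpha> u] by simp
qed

end
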